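(* Let $k\ge0$, $K=k+6$, $M=K/\gcd(K,60)$. Let $(a_0;a_1,a_2)$ be integers with $a_0+a_1+a_2=k+3$ such that $C(a_0;a_1,a_2)=J^i(a_0;a_1,a_2)$ for some $i\in\{0,1,2\}$ (i.e. two of $a_0,a_1,a_2$ coincide). Then $D(a_1,a_2)\equiv 0\pmod M$; equivalently, for the corresponding $G_2^{(1)}$-weight $b'$ with $Cb'=J^ib'$, $\dim_{G_2}(b')\equiv0\pmod M$.
   Context: For integers $a_1,a_2$, $D(a_1,a_2)=\frac{1}{120}(a_2-a_1)(a_2+1)(2a_2+a_1+3)(a_2+a_1+2)(a_2+2a_1+3)(a_1+1)$ (the formal $G_2$ Weyl dimension, an integer). Integral level-$(k+2)$ $G_2^{(1)}$-weights $(c_0;c_1,c_2)$ (integers, $c_0+2c_1+c_2=k+2$) correspond to integer triples $(a_0;a_1,a_2)$ with $a_0+a_1+a_2=k+3$ via $(a_0;a_1,a_2)=(c_0;c_1,c_1+c_2+1)$, and $\dim_{G_2}(c)=D(a_1,a_2)$. On these triples, $C(a_0;a_1,a_2)=(a_0;a_2,a_1)$ and $J(a_0;a_1,a_2)=(a_2;a_0,a_1)$; on $G_2$ labels $C(c_0;c_1,c_2)=(c_0;c_1+c_2+1,-c_2-2)$ and $J(c_0;c_1,c_2)=(c_1+c_2+1;c_0,c_1-c_0-1)$. *)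

theory Defs
  imports Main "HOL.Rat"
begin

text \<open>Formal G2 Weyl dimension, as a rational number (it is in fact an integer).\<close>
definition D :: "int \<Rightarrow> int \<Rightarrow> rat" where
  "D a1 a2 = (1/120) * of_int ((a2 - a1) * (a2 + 1) * (2*a2 + a1 + 3) * (a2 + a1 + 2)
                               * (a2 + 2*a1 + 3) * (a1 + 1))"

definition Cmap :: "int \<times> int \<times> int \<Rightarrow> int \<times> int \<times> int" where
  "Cmap t = (case t of (a0, a1, a2) \<Rightarrow> (a0, a2, a1))"

definition Jmap :: "int \<times> int \<times> int \<Rightarrow> int \<times> int \<times> int" where
  "Jmap t = (case t of (a0, a1, a2) \<Rightarrow> (a2, a0, a1))"

end

theory Submission
  imports Defs "HOL-Number_Theory.Cong"
begin

text \<open>Let \<open>K = a\<^sub>0 + a\<^sub>1 + a\<^sub>2 + 3\<close> and let \<open>N\<close> be the integer product with \<open>D = N / 120\<close>. Since \<open>N\<close> is antisymmetric in \<open>a\<^sub>1, a\<^sub>2\<close>, the case \<open>a\<^sub>0 = a\<^sub>1\<close>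
  reduces to \<open>a\<^sub>0 = a\<^sub>2\<close>, where the factor \<open>2a\<^sub>2 + a\<^sub>1 + 3\<close> equals \<open>K\<close>, so \<open>N = K \<cdot> P\<close> for a
  quintic cofactor \<open>P\<close> in \<open>a\<^sub>2\<close> and \<open>K\<close>. It remains to see that \<open>120\<close> divides \<open>gcd K 60 \<cdot> P\<close>:
  for each of \<open>3\<close>, \<open>5\<close> and \<open>8\<close>, whatever part of it is missing from \<open>gcd K 60\<close> is supplied by
  \<open>P\<close>, which is checked on residues of \<open>a\<^sub>2\<close> and \<open>K\<close>.\<close>

definition g2_weyl_numerator :: "int \<Rightarrow> int \<Rightarrow> int" where
  "g2_weyl_numerator a1 a2 =
     (a2 - a1) * (a2 + 1) * (2*a2 + a1 + 3) * (a2 + a1 + 2) * (a2 + 2*a1 + 3) * (a1 + 1)"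

definition weyl_cofactor :: "int \<Rightarrow> int \<Rightarrow> int" where
  "weyl_cofactor a K = (3*a - K + 3) * (a + 1) * (K - 1 - a) * (2*K - 3 - 3*a) * (K - 2 - 2*a)"

lemma D_conv_g2_weyl_numerator: "D a1 a2 = of_int (g2_weyl_numerator a1 a2) / 120"
  by (simp add: D_def g2_weyl_numerator_def)

lemma g2_weyl_numerator_swap: "g2_weyl_numerator a2 a1 = - g2_weyl_numerator a1 a2"
  by (simp add: g2_weyl_numerator_def algebra_simps)

lemma g2_weyl_numerator_diag: "g2_weyl_numerator a a = 0"
  by (simp add: g2_weyl_numerator_def)

lemma g2_weyl_numerator_wall: "g2_weyl_numerator (K - 3 - 2*a) a = K * weyl_cofactor a K"
  by (simp add: g2_weyl_numerator_def weyl_cofactor_def algebra_simps)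

lemma weyl_cofactor_mod: "weyl_cofactor a K mod m = weyl_cofactor (a mod m) (K mod m) mod m"
proof -
  have "[a mod m = a] (mod m)" "[K mod m = K] (mod m)"
    by (simp_all add: cong_def)
  then have "[weyl_cofactor (a mod m) (K mod m) = weyl_cofactor a K] (mod m)"
    unfolding weyl_cofactor_def by (intro cong_mult cong_add cong_diff cong_refl)
  then show ?thesis
    by (simp add: cong_def)
qed

lemma two_dvd_weyl_cofactor: "2 dvd weyl_cofactor a K"
proof -
  have "K mod 2 = 0 \<or> K mod 2 = 1" "a mod 2 = 0 \<or> a mod 2 = 1"
    by presburger+
  then have "weyl_cofactor (a mod 2) (K mod 2) mod 2 = 0"
    unfolding weyl_cofactor_def by (elim disjE) simp_all
  then show ?thesis
    using weyl_cofactor_mod[of a K 2] by presburger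
qed

lemma four_dvd_weyl_cofactor: "K mod 4 = 2 \<Longrightarrow> 4 dvd weyl_cofactor a K"
proof -
  assume K: "K mod 4 = 2"
  have "a mod 4 = 0 \<or> a mod 4 = 1 \<or> a mod 4 = 2 \<or> a mod 4 = 3"
    by presburger
  then have "weyl_cofactor (a mod 4) (K mod 4) mod 4 = 0"
    unfolding weyl_cofactor_def K by (elim disjE) simp_all
  then show ?thesis
    using weyl_cofactor_mod[of a K 4] by presburger
qed

lemma eight_dvd_weyl_cofactor: "odd K \<Longrightarrow> 8 dvd weyl_cofactor a K"
proof -
  assume "odd K"
  then have "K mod 8 = 1 \<or> K mod 8 = 3 \<or> K mod 8 = 5 \<or> K mod 8 = 7"
    by presburger
  moreover have "a mod 8 = 0 \<or> a mod 8 = 1 \<or> a mod 8 = 2 \<or> a mod 8 = 3 \<or>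
      a mod 8 = 4 \<or> a mod 8 = 5 \<or> a mod 8 = 6 \<or> a mod 8 = 7"
    by presburger
  ultimately have "weyl_cofactor (a mod 8) (K mod 8) mod 8 = 0"
    unfolding weyl_cofactor_def by (elim disjE) simp_all
  then show ?thesis
    using weyl_cofactor_mod[of a K 8] by presburger
qed

lemma three_dvd_weyl_cofactor: "\<not> 3 dvd K \<Longrightarrow> 3 dvd weyl_cofactor a K"
proof -
  assume "\<not> 3 dvd K"
  then have "K mod 3 = 1 \<or> K mod 3 = 2"
    by presburger
  moreover have "a mod 3 = 0 \<or> a mod 3 = 1 \<or> a mod 3 = 2"
    by presburger
  ultimately have "weyl_cofactor (a mod 3) (K mod 3) mod 3 = 0"
    unfolding weyl_cofactor_def by (elim disjE) simp_all
  then show ?thesis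
    using weyl_cofactor_mod[of a K 3] by presburger
qed

lemma five_dvd_weyl_cofactor: "\<not> 5 dvd K \<Longrightarrow> 5 dvd weyl_cofactor a K"
proof -
  assume "\<not> 5 dvd K"
  then have "K mod 5 = 1 \<or> K mod 5 = 2 \<or> K mod 5 = 3 \<or> K mod 5 = 4"
    by presburger
  moreover have "a mod 5 = 0 \<or> a mod 5 = 1 \<or> a mod 5 = 2 \<or> a mod 5 = 3 \<or> a mod 5 = 4"
    by presburger
  ultimately have "weyl_cofactor (a mod 5) (K mod 5) mod 5 = 0"
    unfolding weyl_cofactor_def by (elim disjE) simp_all
  then show ?thesis
    using weyl_cofactor_mod[of a K 5] by presburger
qed

lemma dvd_gcd_60_times_weyl_cofactor: "120 dvd gcd K 60 * weyl_cofactor a K"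
proof -
  let ?g = "gcd K 60" and ?P = "weyl_cofactor a K"
  have "3 dvd ?g * ?P"
    using three_dvd_weyl_cofactor[of K a] by (cases "3 dvd K") simp_all
  moreover have "5 dvd ?g * ?P"
    using five_dvd_weyl_cofactor[of K a] by (cases "5 dvd K") simp_all
  moreover have "8 dvd ?g * ?P"
  proof -
    have "4 dvd K \<or> K mod 4 = 2 \<or> odd K"
      by presburger
    then consider "4 dvd K" | "K mod 4 = 2" | "odd K"
      by blast
    then show ?thesis
    proof cases
      case 1
      then have "4 dvd ?g"
        by simp
      then have "4 * 2 dvd ?g * ?P"
        using two_dvd_weyl_cofactor by (rule mult_dvd_mono)
      then show ?thesis
        by simp
    next
      case 2
      then have "2 dvd ?g"
        by (simp add: even_iff_mod_2_eq_zero mod_mod_cancel[of 2 4, symmetric])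
      then have "2 * 4 dvd ?g * ?P"
        using four_dvd_weyl_cofactor[OF 2] by (rule mult_dvd_mono)
      then show ?thesis
        by simp
    next
      case 3
      then show ?thesis
        using eight_dvd_weyl_cofactor by simp
    qed
  qed
  ultimately show ?thesis
    by presburger
qed

lemma g2_weyl_numerator_dvd_wall:
  assumes "a0 + a1 + a2 = K - 3" and "a0 = a2"
  shows "120 * (K div gcd K 60) dvd g2_weyl_numerator a1 a2"
proof -
  have "a1 = K - 3 - 2*a2"
    using assms by simp
  then have "g2_weyl_numerator a1 a2 = K * weyl_cofactor a2 K"
    using g2_weyl_numerator_wall by simp
  also have "\<dots> = (gcd K 60 * weyl_cofactor a2 K) * (K div gcd K 60)"
    by (simp add: mult.commute)
  finally show ?thesis
    using dvd_gcd_60_times_weyl_cofactor by (simp add: mult_dvd_mono)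
qed

lemma D_eq_multiple: "120 * M dvd g2_weyl_numerator a1 a2 \<Longrightarrow> \<exists>n. D a1 a2 = of_int (M * n)"
  by (elim dvdE) (auto simp: D_conv_g2_weyl_numerator)

lemma Cmap_eq_Jmap_power_imp:
  assumes "i \<in> {0, 1, 2}" and "Cmap (a0, a1, a2) = (Jmap ^^ i) (a0, a1, a2)"
  shows "a1 = a2 \<or> a0 = a2 \<or> a0 = a1"
proof -
  have "(Jmap ^^ i) (a0, a1, a2) \<in> {(a0, a1, a2), (a2, a0, a1), (a1, a2, a0)}"
    using assms(1) by (auto simp: Jmap_def numeral_2_eq_2)
  then have "(a0, a2, a1) \<in> {(a0, a1, a2), (a2, a0, a1), (a1, a2, a0)}"
    using assms(2) by (simp add: Cmap_def)
  then show ?thesis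
    by (simp only: insert_iff singleton_iff prod.inject empty_iff) blast
qed

theorem theorem3:
  fixes k :: nat and a0 a1 a2 :: int and i :: nat
  assumes "a0 + a1 + a2 = int k + 3"
    and "i \<in> {0, 1, 2}"
    and "Cmap (a0, a1, a2) = (Jmap ^^ i) (a0, a1, a2)"
  shows "\<exists>n::int. D a1 a2 = of_int ((int (k + 6) div gcd (int (k + 6)) 60) * n)"
proof (rule D_eq_multiple)
  define K where "K = int (k + 6)"
  have sum: "a0 + a1 + a2 = K - 3" and sum': "a0 + a2 + a1 = K - 3"
    using assms(1) by (simp_all add: K_def)
  consider "a1 = a2" | "a0 = a2" | "a0 = a1"
    using Cmap_eq_Jmap_power_imp[OF assms(2,3)] by blast
  then show "120 * (K div gcd K 60) dvd g2_weyl_numerator a1 a2"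
  proof cases
    case 1
    then show ?thesis
      by (simp add: g2_weyl_numerator_diag)
  next
    case 2
    then show ?thesis
      using g2_weyl_numerator_dvd_wall[OF sum] by blast
  next
    case 3
    then show ?thesis
      using g2_weyl_numerator_dvd_wall[OF sum'] g2_weyl_numerator_swap[of a2 a1] by simp
  qed
qed

end
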